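(* Let $\mathfrak T=(\mathcal X,\mathcal Y)$ be a nice couple and $(Q,G)$ a PMQ-group pair with $Q$ augmented. Then $\mathrm{Hur}(\mathfrak T;Q_+,G)$ is a closed subspace of $\mathrm{Hur}(\mathfrak T;Q,G)$.
   Context: Conventions: $*:=-\sqrt{-1}\in\mathbb C$; $\mathbb H=\{z\in\mathbb C:\operatorname{Im}z\ge0\}$. A subset of $\mathbb C$ is semi-algebraic if it is a finite union of sets each defined by finitely many real polynomial equalities and (weak or strict) inequalities in $\operatorname{Re}z,\operatorname{Im}z$. A nice couple is a pair $(\mathcal X,\mathcal Y)$ of semi-algebraic sets $\mathcal Y\subseteq\mathcal X\subseteq\mathbb H$ with $\mathcal Y$ closed in $\mathcal X$. PMQs: a partially multiplicative quandle (PMQ) is a set $Q$ with an element $\mathbb 1$, an everywhere defined conjugation $(a,b)\mapsto a^b$ and a product $(a,b)\mapsto ab$ defined on $D\subseteq Q\times Q$, such that: (i) $a^a=a$, each $(-)^b$ is bijective, $(a^b)^c=(a^c)^{b^c}$; (ii) $a^{\mathbb 1}=a$, $\mathbb 1^a=\mathbb 1$; (iii) $(a,\mathbb1),(\mathbb1,a)\in D$, $a\mathbb1=\mathbb1a=a$; (iv) if $(a,b),(ab,c)\in D$ then $(b,c),(a,bc)\in D$ and $(ab)c=a(bc)$, and symmetrically; (v) if $(a,b)\in D$ then $(a^c,b^c)\in D$, $(ab)^c=a^cb^c$, $c^{ab}=(c^a)^b$, and $(b,a^b)\in D$ with $ab=b\,a^b$. $Q$ is augmented if $ab=\mathbb1$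 (with $(a,b)\in D$) implies $a=b=\mathbb1$; $Q_+:=Q\setminus\{\mathbb1\}$. A PMQ-group pair $(Q,G)$ is a PMQ $Q$, a group $G$ (a PMQ with full product and $g^h=h^{-1}gh$), a PMQ morphism $\mathfrak e:Q\to G$ and a right action $a\mapsto a^g$ of $G$ on $Q$ by PMQ automorphisms with $a^{\mathfrak e(b)}=a^b$ and $\mathfrak e(a^g)=g^{-1}\mathfrak e(a)g$. Configurations: for finite $P\subset\mathcal X$, $\mathfrak G(P)=\pi_1(\mathbb C\setminus P,* )$; $\mathfrak Q(P)$ is $\{\mathbb1\}$ with the conjugacy classes of small clockwise simple loops around single points of $P\setminus\mathcal Y$; $\mathfrak Q^{\mathrm{ext}}(P)$ is the union of conjugacy classes of clockwise simple closed curves in $\mathbb C\setminus(P\cup\mathcal Y)$ bounding a disc in $\mathbb C\setminus\mathcal Y$; each of its elements $g$ is a product $g_1\cdots g_r$ of elements of $\mathfrak Q(P)$, and $\psi$ extends over $g$ if $\psi(g_1)\cdots\psi(g_r)$ is defined in $Q$ (value $\psi^{\mathrm{ext}}(g)$, independent of choices). Hurwitz space: $\mathrm{Hur}(\mathfrak T;Q,G)$ is the set of triples $(P,\psi,\phi)$, $P\subset\mathcal X$ finite, $\phi:\mathfrak G(P)\to G$ a homomorphism, $\psi:\mathfrak Q(P)\to Q$ with $\psi(\mathbb1)=\mathbb1$, $\mathfrak e\circ\psi=\phi|_{\mathfrak Q(P)}$, $\psi(h^{-1}xh)=\psi(x)^{\phi(h)}$. Its topology has as basis the normal neighbourhoods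 $\mathfrak U(\mathfrak c;\underline U)$: for $\mathfrak c=(P,\psi,\phi)$, $P=\{z_1,\dots,z_k\}$, and an adapted covering $\underline U=(U_1,\dots,U_k)$ (convex semi-algebraic open subsets of $\mathbb C\setminus\{*\}$ with compact pairwise disjoint closures not containing $*$, $U_i\cap P=\{z_i\}$, $\overline{U_i}\cap\mathcal Y=\emptyset$ when $z_i\notin\mathcal Y$), it is the set of $(P',\psi',\phi')$ with $P'\subset\bigcup U_i$ meeting each $U_i$, $\psi'$ extending over every clockwise simple closed curve class which up to free homotopy lies in some $U_i\setminus P'$ with $\overline{U_i}\cap\mathcal Y=\emptyset$, $\phi'\circ\iota=\phi$ and $(\psi')^{\mathrm{ext}}\circ\iota=\psi$ on $\mathfrak Q(P)$, where $\iota:\mathfrak G(P)\cong\pi_1(\mathbb C\setminus\bigcup U_i,* )\to\mathfrak G(P')$ is induced by inclusions. For augmented $Q$, $\mathrm{Hur}(\mathfrak T;Q_+,G)\subseteq\mathrm{Hur}(\mathfrak T;Q,G)$ is the subspace of configurations $(P,\psi,\phi)$ with $\psi^{-1}(\mathbb1)=\{\mathbb1\}$. *)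

theory Defs
  imports "HOL-Complex_Analysis.Complex_Analysis" "HOL-Algebra.Group" "HOL-Library.FuncSet"
begin

definition basept :: complex where "basept = - \<i>"

definition upper_half :: "complex set" where "upper_half = {z. Im z \<ge> 0}"

text \<open>Real polynomials in Re z, Im z, rendered as finite sums of monomials.\<close>
definition poly2 :: "(complex \<Rightarrow> real) set" where
  "poly2 = {f. \<exists>n (c::nat \<Rightarrow> nat \<Rightarrow> real). \<forall>z. f z = (\<Sum>i<n. \<Sum>j<n. c i j * Re z ^ i * Im z ^ j)}"

definition basic_semialg :: "complex set \<Rightarrow> bool" where
  "basic_semialg S \<longleftrightarrow> (\<exists>E W T. finite E \<and> finite W \<and> finite T \<and>
      E \<subseteq> poly2 \<and> W \<subseteq> poly2 \<and> T \<subseteq> poly2 \<and>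
      S = {z. (\<forall>f\<in>E. f z = 0) \<and> (\<forall>f\<in>W. f z \<ge> 0) \<and> (\<forall>f\<in>T. f z > 0)})"

definition semialgebraic :: "complex set \<Rightarrow> bool" where
  "semialgebraic S \<longleftrightarrow> (\<exists>F. finite F \<and> (\<forall>B\<in>F. basic_semialg B) \<and> S = \<Union>F)"

definition nice_couple :: "complex set \<Rightarrow> complex set \<Rightarrow> bool" where
  "nice_couple X Y \<longleftrightarrow> semialgebraic X \<and> semialgebraic Y \<and> Y \<subseteq> X \<and> X \<subseteq> upper_half
      \<and> closedin (top_of_set X) Y"

text \<open>A PMQ with carrier Q, unit unit1, conjugation cj (a^b = cj a b) and a partial
  product pprod defined on the domain D.\<close>
definition pmq :: "'q set \<Rightarrow> 'q \<Rightarrow> ('q \<Rightarrow> 'q \<Rightarrow> 'q) \<Rightarrow> ('q \<times> 'q) set \<Rightarrow> ('q \<Rightarrow> 'q \<Rightarrow> 'q) \<Rightarrow> bool" where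
  "pmq Q unit1 cj D pprod \<longleftrightarrow>
     unit1 \<in> Q \<and> D \<subseteq> Q \<times> Q \<and>
     (\<forall>a\<in>Q. \<forall>b\<in>Q. cj a b \<in> Q) \<and>
     (\<forall>(a,b)\<in>D. pprod a b \<in> Q) \<and>
     \<comment> \<open>(i)\<close>
     (\<forall>a\<in>Q. cj a a = a) \<and>
     (\<forall>b\<in>Q. bij_betw (\<lambda>a. cj a b) Q Q) \<and>
     (\<forall>a\<in>Q. \<forall>b\<in>Q. \<forall>c\<in>Q. cj (cj a b) c = cj (cj a c) (cj b c)) \<and>
     \<comment> \<open>(ii)\<close>
     (\<forall>a\<in>Q. cj a unit1 = a \<and> cj unit1 a = unit1) \<and>
     \<comment> \<open>(iii)\<close>
     (\<forall>a\<in>Q. (a, unit1) \<in> D \<and> (unit1, a) \<in> D \<and> pprod a unit1 = a \<and> pprod unit1 a = a) \<and>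
     \<comment> \<open>(iv)\<close>
     (\<forall>a\<in>Q. \<forall>b\<in>Q. \<forall>c\<in>Q. (a,b) \<in> D \<and> (pprod a b, c) \<in> D \<longrightarrow>
          (b,c) \<in> D \<and> (a, pprod b c) \<in> D \<and> pprod (pprod a b) c = pprod a (pprod b c)) \<and>
     (\<forall>a\<in>Q. \<forall>b\<in>Q. \<forall>c\<in>Q. (b,c) \<in> D \<and> (a, pprod b c) \<in> D \<longrightarrow>
          (a,b) \<in> D \<and> (pprod a b, c) \<in> D \<and> pprod (pprod a b) c = pprod a (pprod b c)) \<and>
     \<comment> \<open>(v)\<close>
     (\<forall>a\<in>Q. \<forall>b\<in>Q. \<forall>c\<in>Q. (a,b) \<in> D \<longrightarrow>
          (cj a c, cj b c) \<in> D \<and> cj (pprod a b) c = pprod (cj a c) (cj b c) \<and>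
          cj c (pprod a b) = cj (cj c a) b \<and>
          (b, cj a b) \<in> D \<and> pprod a b = pprod b (cj a b))"

definition pmq_augmented :: "'q set \<Rightarrow> 'q \<Rightarrow> ('q \<times> 'q) set \<Rightarrow> ('q \<Rightarrow> 'q \<Rightarrow> 'q) \<Rightarrow> bool" where
  "pmq_augmented Q unit1 D pprod \<longleftrightarrow>
     (\<forall>a\<in>Q. \<forall>b\<in>Q. (a,b) \<in> D \<and> pprod a b = unit1 \<longrightarrow> a = unit1 \<and> b = unit1)"

text \<open>A PMQ-group pair (Q,G): the group G is regarded as a PMQ with full product and
  conjugation g^h = h^{-1} g h; e is a PMQ morphism; act is a right action of G on Q by
  PMQ automorphisms.\<close>
definition pmq_group_pair ::
  "'q set \<Rightarrow> 'q \<Rightarrow> ('q \<Rightarrow> 'q \<Rightarrow> 'q) \<Rightarrow> ('q \<times> 'q) set \<Rightarrow> ('q \<Rightarrow> 'q \<Rightarrow> 'q) \<Rightarrow>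
   ('g, 'm) monoid_scheme \<Rightarrow> ('q \<Rightarrow> 'g) \<Rightarrow> ('q \<Rightarrow> 'g \<Rightarrow> 'q) \<Rightarrow> bool" where
  "pmq_group_pair Q unit1 cj D pprod G e act \<longleftrightarrow>
     pmq Q unit1 cj D pprod \<and> group G \<and>
     \<comment> \<open>e is a PMQ morphism Q \<rightarrow> G\<close>
     (\<forall>a\<in>Q. e a \<in> carrier G) \<and> e unit1 = \<one>\<^bsub>G\<^esub> \<and>
     (\<forall>a\<in>Q. \<forall>b\<in>Q. e (cj a b) = inv\<^bsub>G\<^esub> (e b) \<otimes>\<^bsub>G\<^esub> e a \<otimes>\<^bsub>G\<^esub> e b) \<and>
     (\<forall>(a,b)\<in>D. e (pprod a b) = e a \<otimes>\<^bsub>G\<^esub> e b) \<and>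
     \<comment> \<open>right action of G on Q\<close>
     (\<forall>a\<in>Q. \<forall>g\<in>carrier G. act a g \<in> Q) \<and>
     (\<forall>a\<in>Q. act a \<one>\<^bsub>G\<^esub> = a) \<and>
     (\<forall>a\<in>Q. \<forall>g\<in>carrier G. \<forall>h\<in>carrier G. act (act a g) h = act a (g \<otimes>\<^bsub>G\<^esub> h)) \<and>
     \<comment> \<open>by PMQ automorphisms\<close>
     (\<forall>g\<in>carrier G. bij_betw (\<lambda>a. act a g) Q Q \<and> act unit1 g = unit1 \<and>
        (\<forall>a\<in>Q. \<forall>b\<in>Q. act (cj a b) g = cj (act a g) (act b g)) \<and>
        (\<forall>a\<in>Q. \<forall>b\<in>Q. (a,b) \<in> D \<longleftrightarrow> (act a g, act b g) \<in> D) \<and>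
        (\<forall>(a,b)\<in>D. act (pprod a b) g = pprod (act a g) (act b g))) \<and>
     \<comment> \<open>compatibility\<close>
     (\<forall>a\<in>Q. \<forall>b\<in>Q. act a (e b) = cj a b) \<and>
     (\<forall>a\<in>Q. \<forall>g\<in>carrier G. e (act a g) = inv\<^bsub>G\<^esub> g \<otimes>\<^bsub>G\<^esub> e a \<otimes>\<^bsub>G\<^esub> g)"

definition pmul :: "('q \<times> 'q) set \<Rightarrow> ('q \<Rightarrow> 'q \<Rightarrow> 'q) \<Rightarrow> 'q \<Rightarrow> 'q \<Rightarrow> 'q option" where
  "pmul D pprod a b = (if (a,b) \<in> D then Some (pprod a b) else None)"

definition pmq_listprod :: "'q \<Rightarrow> ('q \<times> 'q) set \<Rightarrow> ('q \<Rightarrow> 'q \<Rightarrow> 'q) \<Rightarrow> 'q list \<Rightarrow> 'q option" where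
  "pmq_listprod unit1 D pprod xs = foldl (\<lambda>acc a. Option.bind acc (\<lambda>x. pmul D pprod x a)) (Some unit1) xs"

type_synonym loop = "real \<Rightarrow> complex"

definition is_loop :: "complex set \<Rightarrow> loop \<Rightarrow> bool" where
  "is_loop P \<gamma> \<longleftrightarrow> path \<gamma> \<and> path_image \<gamma> \<subseteq> - P \<and> pathstart \<gamma> = basept \<and> pathfinish \<gamma> = basept"

definition lclass :: "complex set \<Rightarrow> loop \<Rightarrow> loop set" where
  "lclass P \<gamma> = {\<delta>. homotopic_paths (- P) \<gamma> \<delta>}"

text \<open>Carrier of G(P) = pi_1(C \ P, basept); product of classes is concatenation of loops.\<close>
definition fg :: "complex set \<Rightarrow> loop set set" where
  "fg P = {lclass P \<gamma> | \<gamma>. is_loop P \<gamma>}"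

definition const_loop :: loop where "const_loop = (\<lambda>t. basept)"

definition joinlist :: "loop list \<Rightarrow> loop" where
  "joinlist \<gamma>s = foldr (+++) \<gamma>s const_loop"

definition cw_scc :: "loop \<Rightarrow> bool" where
  "cw_scc \<gamma> \<longleftrightarrow> simple_path \<gamma> \<and> pathfinish \<gamma> = pathstart \<gamma> \<and>
      (\<forall>w\<in>inside (path_image \<gamma>). winding_number \<gamma> w = -1)"

text \<open>Q(P): the unit together with the conjugacy classes of small clockwise simple loops
  around single points of P \ Y (lassos: path alpha, small clockwise circle, alpha reversed).\<close>
definition QP :: "complex set \<Rightarrow> complex set \<Rightarrow> loop set set" where
  "QP Y P = {lclass P const_loop} \<union>
     {lclass P (\<alpha> +++ reversepath (circlepath z r) +++ reversepath \<alpha>) | \<alpha> z r.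
        z \<in> P - Y \<and> r > 0 \<and> cball z r \<inter> P = {z} \<and>
        path \<alpha> \<and> path_image \<alpha> \<subseteq> - P \<and> pathstart \<alpha> = basept \<and> pathfinish \<alpha> = z + of_real r}"

text \<open>Extension of psi: g = g_1 ... g_r with g_i in Q(P) and psi(g_1)...psi(g_r) defined
  in Q with value q.\<close>
definition ext_val :: "'q \<Rightarrow> ('q \<times> 'q) set \<Rightarrow> ('q \<Rightarrow> 'q \<Rightarrow> 'q) \<Rightarrow> complex set \<Rightarrow> complex set \<Rightarrow>
     (loop set \<Rightarrow> 'q) \<Rightarrow> loop set \<Rightarrow> 'q \<Rightarrow> bool" where
  "ext_val unit1 D pprod Y P \<psi> g q \<longleftrightarrow>
     (\<exists>\<gamma>s. (\<forall>\<gamma>\<in>set \<gamma>s. is_loop P \<gamma> \<and> lclass P \<gamma> \<in> QP Y P) \<and>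
           g = lclass P (joinlist \<gamma>s) \<and>
           pmq_listprod unit1 D pprod (map (\<lambda>\<gamma>. \<psi> (lclass P \<gamma>)) \<gamma>s) = Some q)"

type_synonym ('q,'g) hconf = "complex set \<times> (loop set \<Rightarrow> 'q) \<times> (loop set \<Rightarrow> 'g)"

definition Hur_set ::
  "complex set \<Rightarrow> complex set \<Rightarrow> 'q set \<Rightarrow> 'q \<Rightarrow> ('q \<Rightarrow> 'q \<Rightarrow> 'q) \<Rightarrow>
   ('g, 'm) monoid_scheme \<Rightarrow> ('q \<Rightarrow> 'g) \<Rightarrow> ('q \<Rightarrow> 'g \<Rightarrow> 'q) \<Rightarrow> ('q,'g) hconf set" where
  "Hur_set X Y Q unit1 cj G e act =
     {(P, \<psi>, \<phi>). finite P \<and> P \<subseteq> X \<and>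
        \<comment> \<open>phi : G(P) \<rightarrow> G homomorphism\<close>
        \<phi> \<in> extensional (fg P) \<and>
        (\<forall>\<gamma>. is_loop P \<gamma> \<longrightarrow> \<phi> (lclass P \<gamma>) \<in> carrier G) \<and>
        (\<forall>\<gamma> \<delta>. is_loop P \<gamma> \<and> is_loop P \<delta> \<longrightarrow>
            \<phi> (lclass P (\<gamma> +++ \<delta>)) = \<phi> (lclass P \<gamma>) \<otimes>\<^bsub>G\<^esub> \<phi> (lclass P \<delta>)) \<and>
        \<comment> \<open>psi : Q(P) \<rightarrow> Q\<close>
        \<psi> \<in> extensional (QP Y P) \<and>
        (\<forall>x\<in>QP Y P. \<psi> x \<in> Q) \<and>
        \<psi> (lclass P const_loop) = unit1 \<and>
        (\<forall>x\<in>QP Y P. e (\<psi> x) = \<phi> x) \<and>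
        (\<forall>\<gamma> \<eta>. is_loop P \<gamma> \<and> lclass P \<gamma> \<in> QP Y P \<and> is_loop P \<eta> \<longrightarrow>
            \<psi> (lclass P (reversepath \<eta> +++ \<gamma> +++ \<eta>)) = act (\<psi> (lclass P \<gamma>)) (\<phi> (lclass P \<eta>)))}"

definition adapted :: "complex set \<Rightarrow> complex set \<Rightarrow> (complex \<Rightarrow> complex set) \<Rightarrow> bool" where
  "adapted Y P U \<longleftrightarrow>
     (\<forall>z\<in>P. convex (U z) \<and> semialgebraic (U z) \<and> open (U z) \<and> basept \<notin> closure (U z) \<and>
        compact (closure (U z)) \<and> U z \<inter> P = {z} \<and>
        (z \<notin> Y \<longrightarrow> closure (U z) \<inter> Y = {})) \<and>
     (\<forall>z\<in>P. \<forall>w\<in>P. z \<noteq> w \<longrightarrow> closure (U z) \<inter> closure (U w) = {})"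

definition normal_nbhd ::
  "complex set \<Rightarrow> complex set \<Rightarrow> 'q set \<Rightarrow> 'q \<Rightarrow> ('q \<Rightarrow> 'q \<Rightarrow> 'q) \<Rightarrow> ('q \<times> 'q) set \<Rightarrow>
   ('q \<Rightarrow> 'q \<Rightarrow> 'q) \<Rightarrow> ('g, 'm) monoid_scheme \<Rightarrow> ('q \<Rightarrow> 'g) \<Rightarrow> ('q \<Rightarrow> 'g \<Rightarrow> 'q) \<Rightarrow>
   ('q,'g) hconf \<Rightarrow> (complex \<Rightarrow> complex set) \<Rightarrow> ('q,'g) hconf set" where
  "normal_nbhd X Y Q unit1 cj D pprod G e act c U =
     (case c of (P, \<psi>, \<phi>) \<Rightarrow>
      {(P', \<psi>', \<phi>') \<in> Hur_set X Y Q unit1 cj G e act.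
         P' \<subseteq> (\<Union>z\<in>P. U z) \<and> (\<forall>z\<in>P. P' \<inter> U z \<noteq> {}) \<and>
         (\<forall>z\<in>P. closure (U z) \<inter> Y = {} \<longrightarrow>
            (\<forall>\<alpha> \<gamma>. cw_scc \<gamma> \<and> path_image \<gamma> \<subseteq> U z - P' \<and>
               path \<alpha> \<and> path_image \<alpha> \<subseteq> - P' \<and> pathstart \<alpha> = basept \<and> pathfinish \<alpha> = pathstart \<gamma> \<longrightarrow>
               (\<exists>q. ext_val unit1 D pprod Y P' \<psi>' (lclass P' (\<alpha> +++ \<gamma> +++ reversepath \<alpha>)) q))) \<and>
         (\<forall>\<gamma>. is_loop P \<gamma> \<and> path_image \<gamma> \<inter> (\<Union>z\<in>P. U z) = {} \<longrightarrow>
            \<phi>' (lclass P' \<gamma>) = \<phi> (lclass P \<gamma>)) \<and>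
         (\<forall>\<gamma>. is_loop P \<gamma> \<and> path_image \<gamma> \<inter> (\<Union>z\<in>P. U z) = {} \<and> lclass P \<gamma> \<in> QP Y P \<longrightarrow>
            ext_val unit1 D pprod Y P' \<psi>' (lclass P' \<gamma>) (\<psi> (lclass P \<gamma>)))})"

definition Hur_top ::
  "complex set \<Rightarrow> complex set \<Rightarrow> 'q set \<Rightarrow> 'q \<Rightarrow> ('q \<Rightarrow> 'q \<Rightarrow> 'q) \<Rightarrow> ('q \<times> 'q) set \<Rightarrow>
   ('q \<Rightarrow> 'q \<Rightarrow> 'q) \<Rightarrow> ('g, 'm) monoid_scheme \<Rightarrow> ('q \<Rightarrow> 'g) \<Rightarrow> ('q \<Rightarrow> 'g \<Rightarrow> 'q) \<Rightarrow>
   ('q,'g) hconf topology" where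
  "Hur_top X Y Q unit1 cj D pprod G e act =
     topology_generated_by
       {normal_nbhd X Y Q unit1 cj D pprod G e act c U | c U.
          c \<in> Hur_set X Y Q unit1 cj G e act \<and> adapted Y (fst c) U}"

text \<open>Hur(T; Q_+, G): configurations with psi^{-1}(1) = {1}.\<close>
definition Hur_plus_set ::
  "complex set \<Rightarrow> complex set \<Rightarrow> 'q set \<Rightarrow> 'q \<Rightarrow> ('q \<Rightarrow> 'q \<Rightarrow> 'q) \<Rightarrow>
   ('g, 'm) monoid_scheme \<Rightarrow> ('q \<Rightarrow> 'g) \<Rightarrow> ('q \<Rightarrow> 'g \<Rightarrow> 'q) \<Rightarrow> ('q,'g) hconf set" where
  "Hur_plus_set X Y Q unit1 cj G e act =
     {(P, \<psi>, \<phi>) \<in> Hur_set X Y Q unit1 cj G e act.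
        \<forall>x\<in>QP Y P. \<psi> x = unit1 \<longrightarrow> x = lclass P const_loop}"

end

theory Submission
  imports Defs
begin

(* If (P, psi, phi) lies outside Hur(T; Q_+, G), some nontrivial lasso class x around a point
   z of P - Y has psi x = 1. For every configuration (P', psi', phi') in a small enough normal
   neighbourhood, psi' extends over the same lasso with value 1; by augmentation the lasso is
   then a product of trivial classes of Q(P') if (P', psi', phi') lies in Hur(T; Q_+, G), hence
   null-homotopic in C - P'. But the lasso winds once around the points of P' near z, which
   exist by definition of a normal neighbourhood. So the complement of Hur(T; Q_+, G) is open. *)

abbreviation lasso :: "loop \<Rightarrow> complex \<Rightarrow> real \<Rightarrow> loop" where
  "lasso \<alpha> z r \<equiv> \<alpha> +++ reversepath (circlepath z r) +++ reversepath \<alpha>"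

lemma semialgebraic_ball:
  assumes "d > 0"
  shows "semialgebraic (ball (a::complex) d)"
proof -
  define c :: "nat \<Rightarrow> nat \<Rightarrow> real" where "c i j = (if i = 0 \<and> j = 0 then d^2 - Re a ^ 2 - Im a ^ 2
     else if i = 1 \<and> j = 0 then 2 * Re a else if i = 0 \<and> j = 1 then 2 * Im a
     else if i = 2 \<and> j = 0 then -1 else if i = 0 \<and> j = 2 then -1 else 0)" for i j
  define f where "f z = (\<Sum>i<3. \<Sum>j<3. c i j * Re z ^ i * Im z ^ j)" for z
  have "f \<in> poly2"
    unfolding poly2_def f_def by blast
  have "f z = d^2 - (Re z - Re a)^2 - (Im z - Im a)^2" for z
    by (simp add: f_def c_def numeral_3_eq_3 power2_eq_square algebra_simps)
  moreover have "(dist a z)^2 = (Re z - Re a)^2 + (Im z - Im a)^2" for z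
    by (simp add: dist_norm cmod_power2 power2_commute)
  moreover have "dist a z < d \<longleftrightarrow> (dist a z)^2 < d^2" for z
    using assms power_strict_mono[of "dist a z" d 2] power_less_imp_less_base[of "dist a z" 2 d]
    by auto
  ultimately have "ball a d = {z. f z > 0}"
    unfolding ball_def by auto
  then have "basic_semialg (ball a d)"
    unfolding basic_semialg_def using \<open>f \<in> poly2\<close>
    by (intro exI[of _ "{}"] exI[of _ "{f}"]) auto
  then show ?thesis
    unfolding semialgebraic_def by (intro exI[of _ "{ball a d}"]) simp
qed

lemma nice_couple_basept_notin:
  "nice_couple X Y \<Longrightarrow> P \<subseteq> X \<Longrightarrow> basept \<notin> P"
  by (auto simp: nice_couple_def upper_half_def basept_def)

lemma adapted_ballsI:
  assumes d: "0 < d" and bp: "\<forall>z\<in>P. d < dist z basept"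
    and Y: "\<forall>z\<in>P - Y. cball z d \<inter> Y = {}" and sep: "\<forall>z\<in>P. \<forall>w\<in>P. z \<noteq> w \<longrightarrow> 2 * d < dist z w"
  shows "adapted Y P (\<lambda>z. ball z d)"
  unfolding adapted_def
proof (intro conjI ballI impI)
  fix z assume z: "z \<in> P"
  show "convex (ball z d)" "open (ball z d)" "compact (closure (ball z d))"
    by (simp_all add: closure_ball d)
  show "semialgebraic (ball z d)"
    using d by (rule semialgebraic_ball)
  have "d < dist z basept"
    using bp z by blast
  then show "basept \<notin> closure (ball z d)"
    using d by (simp add: closure_ball)
  have "w = z" if "w \<in> ball z d \<inter> P" for w
  proof (rule ccontr)
    assume "w \<noteq> z"
    have "w \<in> P" "dist z w < d"
      using that by auto
    moreover from this(1) have "2 * d < dist z w"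
      using sep z \<open>w \<noteq> z\<close> by simp
    ultimately show False
      using d by linarith
  qed
  then show "ball z d \<inter> P = {z}"
    using d z by auto
  show "closure (ball z d) \<inter> Y = {}" if "z \<notin> Y"
    using Y z that d by (simp add: closure_ball)
next
  fix z w assume "z \<in> P" "w \<in> P" "z \<noteq> w"
  then have "2 * d < dist z w"
    using sep by simp
  show "closure (ball z d) \<inter> closure (ball w d) = {}"
  proof (rule equals0I)
    fix y assume "y \<in> closure (ball z d) \<inter> closure (ball w d)"
    then have "dist z y \<le> d" "dist w y \<le> d"
      using d by auto
    then show False
      using \<open>2 * d < dist z w\<close> dist_triangle[of z w y] dist_commute[of y w] by linarith
  qed
qed

lemma eventually_adapted_balls:
  assumes Y: "closedin (top_of_set X) Y" and fin: "finite P" and PX: "P \<subseteq> X"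
    and bp: "basept \<notin> P"
  shows "\<forall>\<^sub>F d in at_right 0. adapted Y P (\<lambda>z. ball z d)"
proof -
  have below: "\<forall>\<^sub>F d in at_right 0. d < c" if "c > 0" for c :: real
    using eventually_at_right_real[OF that] by (rule eventually_mono) simp
  have avoid_Y: "\<forall>\<^sub>F d in at_right 0. cball z d \<inter> Y = {}" if z: "z \<in> P - Y" for z
  proof -
    obtain T where T: "closed T" "Y = X \<inter> T"
      using Y by (auto simp: closedin_closed)
    then have "z \<in> - T" "open (- T)"
      using z PX by auto
    then obtain e where "e > 0" "ball z e \<subseteq> - T"
      using open_contains_ball by blast
    then have "ball z e \<inter> Y = {}"
      using T(2) by auto
    show ?thesis
    proof (rule eventually_mono[OF below[OF \<open>e > 0\<close>]])
      fix d assume "d < e"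
      then have "cball z d \<subseteq> ball z e"
        by (simp add: cball_subset_ball_iff)
      then show "cball z d \<inter> Y = {}"
        using \<open>ball z e \<inter> Y = {}\<close> by blast
    qed
  qed
  have separated: "\<forall>\<^sub>F d in at_right 0. z \<noteq> w \<longrightarrow> 2 * d < dist z w" for z w :: complex
  proof (cases "z = w")
    case False
    then show ?thesis
      by (intro eventually_mono[OF below[of "dist z w / 2"]]) auto
  qed simp
  have "\<forall>\<^sub>F d in at_right 0. \<forall>z\<in>P - Y. cball z d \<inter> Y = {}"
    using fin avoid_Y by (intro eventually_ball_finite) auto
  moreover have "\<forall>\<^sub>F d in at_right 0. \<forall>z\<in>P. d < dist z basept"
    using fin bp by (intro eventually_ball_finite ballI below) auto
  moreover have "\<forall>\<^sub>F d in at_right 0. \<forall>z\<in>P. \<forall>w\<in>P. z \<noteq> w \<longrightarrow> 2 * d < dist z w"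
    using fin by (intro eventually_ball_finite ballI separated)
  ultimately show ?thesis
    using eventually_at_right_less[of 0] by eventually_elim (simp add: adapted_ballsI)
qed

section \<open>Loops in a punctured disc\<close>

lemma compact_subset_ball_imp_subset_cball:
  assumes "compact K" "K \<noteq> {}" "K \<subseteq> ball (z::'a::metric_space) d"
  shows "\<exists>R. 0 < R \<and> R < d \<and> K \<subseteq> cball z R"
proof -
  have "compact (dist z ` K)"
    by (intro compact_continuous_image continuous_intros assms)
  then obtain m where m: "m \<in> dist z ` K" "\<forall>t\<in>dist z ` K. t \<le> m"
    using compact_attains_sup assms(2) by (metis image_is_empty)
  then have "m < d" "0 \<le> m"
    using assms by auto
  then have "0 < d"
    by linarith
  with m \<open>m < d\<close> show ?thesis
    using m by (intro exI[of _ "max m (d/2)"]) auto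
qed

lemma homotopic_paths_punctured_ball:
  assumes h: "homotopic_paths (-{z::complex}) p q"
    and p: "path_image p \<subseteq> ball z d" and q: "path_image q \<subseteq> ball z d"
  shows "homotopic_paths (ball z d - {z}) p q"
proof -
  have pq: "path p" "path q" "path_image p \<subseteq> -{z}" "path_image q \<subseteq> -{z}"
    using homotopic_paths_imp_path homotopic_paths_imp_subset h by blast+
  obtain R where R: "0 < R" "R < d" "path_image p \<union> path_image q \<subseteq> cball z R"
    using compact_subset_ball_imp_subset_cball[of "path_image p \<union> path_image q" z d] p q pq
    by (auto simp: compact_path_image path_image_nonempty)
  \<comment> \<open>radial retraction of C - {z} onto the punctured disc of radius R\<close>
  define f where "f w = z + of_real (R / max R (cmod (w - z))) * (w - z)" for w
  have "continuous_on (-{z}) f"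
    unfolding f_def using R(1) by (intro continuous_intros) auto
  moreover have "f \<in> (-{z}) \<rightarrow> ball z d - {z}"
  proof
    fix w assume w: "w \<in> - {z}"
    have "cmod (f w - z) = R / max R (cmod (w - z)) * cmod (w - z)"
      unfolding f_def using R(1) by (simp add: norm_mult abs_of_pos del: of_real_divide)
    also have "\<dots> \<le> R"
      using R(1) by (simp add: divide_le_eq max_def mult.commute mult_left_mono)
    finally have "cmod (f w - z) < d"
      using R by linarith
    moreover have "f w \<noteq> z"
      using w R(1) unfolding f_def by (auto simp: max_def)
    ultimately show "f w \<in> ball z d - {z}"
      by (simp add: dist_norm norm_minus_commute)
  qed
  ultimately have hf: "homotopic_paths (ball z d - {z}) (f \<circ> p) (f \<circ> q)"
    by (rule homotopic_paths_continuous_image[OF h])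
  have fid: "f w = w" if "w \<in> cball z R" for w
  proof -
    have "cmod (w - z) \<le> R"
      using that by (simp add: dist_norm norm_minus_commute)
    then show ?thesis
      unfolding f_def using R(1) by (simp add: max_def)
  qed
  have S: "path_image p \<subseteq> ball z d - {z}" "path_image q \<subseteq> ball z d - {z}"
    using p q pq by auto
  have "homotopic_paths (ball z d - {z}) p (f \<circ> p)"
    by (rule homotopic_paths_eq[OF pq(1) S(1)]) (use R(3) fid in \<open>force simp: path_image_def\<close>)
  moreover have "homotopic_paths (ball z d - {z}) q (f \<circ> q)"
    by (rule homotopic_paths_eq[OF pq(2) S(2)]) (use R(3) fid in \<open>force simp: path_image_def\<close>)
  ultimately show ?thesis
    using hf by (meson homotopic_paths_sym homotopic_paths_trans)
qed

lemma winding_number_eq_imp_homotopic_paths_punctured_ball: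
  assumes "path p" "path_image p \<subseteq> ball z d - {z}" "path q" "path_image q \<subseteq> ball z d - {z}"
    and "pathstart q = pathstart p" "pathfinish q = pathfinish p"
    and "winding_number p z = winding_number q z"
  shows "homotopic_paths (ball z d - {z}) p q"
  using assms winding_number_homotopic_paths_eq[of p z q]
  by (intro homotopic_paths_punctured_ball) auto

lemma path_image_lasso:
  assumes "pathfinish \<alpha> = z + of_real r" "r > 0"
  shows "path_image (lasso \<alpha> z r) = path_image \<alpha> \<union> sphere z r"
  using assms by (auto simp: path_image_join)

lemma winding_number_lasso:
  assumes \<alpha>: "path \<alpha>" "pathfinish \<alpha> = z + of_real r"
    and p: "p \<notin> path_image \<alpha>" "dist z p < r"
  shows "winding_number (lasso \<alpha> z r) p = -1"
proof -
  have "p \<notin> path_image (circlepath z r)"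
    using p(2) by auto
  moreover have "winding_number (circlepath z r) p = 1"
    using p(2) by (intro winding_number_circlepath) (simp add: dist_norm norm_minus_commute)
  ultimately show ?thesis
    using assms by (simp add: winding_number_join not_in_path_image_join winding_number_reversepath)
qed

lemma homotopic_paths_conjugate_join:
  assumes "path a" "path b" "path c" "path_image a \<subseteq> S" "path_image b \<subseteq> S" "path_image c \<subseteq> S"
    "pathfinish a = pathstart b" "pathfinish b = pathstart c" "pathfinish c = pathstart c"
  shows "homotopic_paths S (a +++ (b +++ c +++ reversepath b) +++ reversepath a)
                           ((a +++ b) +++ c +++ reversepath (a +++ b))"
proof -
  have "homotopic_paths S (a +++ (b +++ c +++ reversepath b) +++ reversepath a)
                          (a +++ b +++ (c +++ reversepath b) +++ reversepath a)"
    using assms by (intro homotopic_paths_join homotopic_paths_sym[OF homotopic_paths_assoc])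
      (auto simp: path_image_join)
  also have "homotopic_paths S \<dots> (a +++ b +++ c +++ reversepath b +++ reversepath a)"
    using assms by (intro homotopic_paths_join homotopic_paths_sym[OF homotopic_paths_assoc])
      (auto simp: path_image_join)
  also have "homotopic_paths S \<dots> ((a +++ b) +++ c +++ reversepath b +++ reversepath a)"
    using assms by (intro homotopic_paths_assoc) (auto simp: path_image_join)
  finally show ?thesis
    using assms by (simp add: reversepath_joinpaths)
qed

lemma cw_scc_punctured_ball_cases:
  assumes d: "d > 0" and cw: "cw_scc \<gamma>" and \<gamma>: "path_image \<gamma> \<subseteq> ball z d - {z}"
  obtains (null) "homotopic_paths (ball z d - {z}) \<gamma> (linepath (pathstart \<gamma>) (pathstart \<gamma>))"
  | (circle) \<beta> \<rho> where "0 < \<rho>" "\<rho> < d" "path \<beta>" "path_image \<beta> \<subseteq> ball z d - {z}"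
      "pathstart \<beta> = pathstart \<gamma>" "pathfinish \<beta> = z + of_real \<rho>"
      "homotopic_paths (ball z d - {z}) \<gamma> (lasso \<beta> z \<rho>)"
proof -
  let ?B = "ball z d - {z}"
  have "path \<gamma>" "pathfinish \<gamma> = pathstart \<gamma>"
    using cw by (auto simp: cw_scc_def simple_path_imp_path)
  have zg: "z \<notin> path_image \<gamma>" and s: "pathstart \<gamma> \<in> ?B"
    using \<gamma> pathstart_in_path_image[of \<gamma>] by auto
  show ?thesis
  proof (cases "z \<in> inside (path_image \<gamma>)")
    case True
    define \<rho> where "\<rho> = d / 2"
    have \<rho>: "0 < \<rho>" "\<rho> < d"
      using d by (auto simp: \<rho>_def)
    have "z + of_real \<rho> \<in> ?B"
      using \<rho> by (auto simp: dist_norm)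
    then obtain \<beta> where \<beta>: "path \<beta>" "path_image \<beta> \<subseteq> ?B" "pathstart \<beta> = pathstart \<gamma>"
      "pathfinish \<beta> = z + of_real \<rho>"
      using path_connected_punctured_ball[of z d] s unfolding path_connected_def
      by (metis DIM_complex order_refl)
    have "path_image (lasso \<beta> z \<rho>) \<subseteq> ?B"
      using \<beta> \<rho> by (auto simp: path_image_lasso dist_norm)
    moreover have "winding_number (lasso \<beta> z \<rho>) z = -1"
      by (rule winding_number_lasso[OF \<beta>(1,4)]) (use \<beta>(2) \<rho> in auto)
    moreover have "winding_number \<gamma> z = -1"
      using True cw by (auto simp: cw_scc_def)
    ultimately have "homotopic_paths ?B \<gamma> (lasso \<beta> z \<rho>)"
      using \<gamma> \<beta> \<open>path \<gamma>\<close> \<open>pathfinish \<gamma> = pathstart \<gamma>\<close>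
      by (intro winding_number_eq_imp_homotopic_paths_punctured_ball) auto
    then show ?thesis
      using circle \<beta> \<rho> by blast
  next
    case False
    then have "z \<in> outside (path_image \<gamma>)"
      using zg inside_Un_outside by blast
    then have "winding_number \<gamma> z = 0"
      using winding_number_zero_in_outside \<open>path \<gamma>\<close> \<open>pathfinish \<gamma> = pathstart \<gamma>\<close> by blast
    then have "homotopic_paths ?B \<gamma> (linepath (pathstart \<gamma>) (pathstart \<gamma>))"
      using \<gamma> s \<open>path \<gamma>\<close> \<open>pathfinish \<gamma> = pathstart \<gamma>\<close>
      by (intro winding_number_eq_imp_homotopic_paths_punctured_ball) auto
    then show ?thesis
      by (rule null)
  qed
qed

lemma lclass_eqI: "homotopic_paths (-P) a b \<Longrightarrow> lclass P a = lclass P b"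
  unfolding lclass_def by (auto intro: homotopic_paths_trans homotopic_paths_sym)

lemma lclass_eqD:
  "lclass P a = lclass P b \<Longrightarrow> path a \<Longrightarrow> path_image a \<subseteq> -P \<Longrightarrow> homotopic_paths (-P) a b"
  unfolding lclass_def by (auto intro: homotopic_paths_sym)

lemma const_loop_eq: "const_loop = linepath basept basept"
  by (simp add: const_loop_def linepath_refl)

lemma const_loop_simps [simp]:
  "path const_loop" "path_image const_loop = {basept}"
  "pathstart const_loop = basept" "pathfinish const_loop = basept"
  by (simp_all add: const_loop_eq)

lemma cw_scc_conjugate_in_QP:
  assumes z: "z \<in> P - Y" and bd: "ball z d \<inter> P = {z}" and d: "d > 0"
    and cw: "cw_scc \<gamma>" and \<gamma>: "path_image \<gamma> \<subseteq> ball z d - P"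
    and \<alpha>: "path \<alpha>" "path_image \<alpha> \<subseteq> -P" "pathstart \<alpha> = basept" "pathfinish \<alpha> = pathstart \<gamma>"
  shows "lclass P (\<alpha> +++ \<gamma> +++ reversepath \<alpha>) \<in> QP Y P"
proof -
  let ?B = "ball z d - {z}"
  have B: "?B \<subseteq> -P"
    using bd by auto
  have closed: "pathfinish \<gamma> = pathstart \<gamma>"
    using cw by (simp add: cw_scc_def)
  have conj: "homotopic_paths (-P) (\<alpha> +++ \<gamma> +++ reversepath \<alpha>) (\<alpha> +++ \<gamma>' +++ reversepath \<alpha>)"
    if "homotopic_paths ?B \<gamma> \<gamma>'" for \<gamma>'
    using homotopic_paths_subset[OF that B] \<alpha> closed
    by (intro homotopic_paths_join) (auto dest: homotopic_paths_imp_pathfinish)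
  have "path_image \<gamma> \<subseteq> ?B"
    using \<gamma> z by auto
  with d cw show ?thesis
  proof (cases rule: cw_scc_punctured_ball_cases)
    case null
    let ?s = "pathstart \<gamma>"
    note conj[OF null]
    also have "homotopic_paths (-P) (\<alpha> +++ linepath ?s ?s +++ reversepath \<alpha>) (\<alpha> +++ reversepath \<alpha>)"
      using \<alpha> by (intro homotopic_paths_join homotopic_paths_lid') auto
    also have "homotopic_paths (-P) (\<alpha> +++ reversepath \<alpha>) const_loop"
      using homotopic_paths_rinv[OF \<alpha>(1,2)] \<alpha>(3) by (simp add: const_loop_eq)
    finally show ?thesis
      unfolding QP_def by (simp add: lclass_eqI)
  next
    case (circle \<beta> \<rho>)
    note conj[OF circle(7)]
    also have "homotopic_paths (-P) (\<alpha> +++ lasso \<beta> z \<rho> +++ reversepath \<alpha>) (lasso (\<alpha> +++ \<beta>) z \<rho>)"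
      using \<alpha> circle B by (intro homotopic_paths_conjugate_join) auto
    finally have "lclass P (\<alpha> +++ \<gamma> +++ reversepath \<alpha>) = lclass P (lasso (\<alpha> +++ \<beta>) z \<rho>)"
      by (rule lclass_eqI)
    moreover have "cball z \<rho> \<inter> P = {z}"
      using bd circle z by auto
    moreover have "path (\<alpha> +++ \<beta>)" "path_image (\<alpha> +++ \<beta>) \<subseteq> -P"
      using \<alpha> circle B by (auto simp: path_image_join)
    ultimately show ?thesis
      unfolding QP_def using z circle \<alpha>
      by (intro UnI2 CollectI exI[of _ "\<alpha> +++ \<beta>"] exI[of _ z] exI[of _ \<rho>]) auto
  qed
qed

lemma homotopic_paths_joinlist_const:
  assumes "basept \<notin> P" "\<forall>\<gamma>\<in>set \<gamma>s. is_loop P \<gamma> \<and> homotopic_paths (-P) \<gamma> const_loop"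
  shows "homotopic_paths (-P) (joinlist \<gamma>s) const_loop"
  using assms(2)
proof (induction \<gamma>s)
  case Nil
  then show ?case
    using assms(1) by (simp add: joinlist_def)
next
  case (Cons \<gamma> \<gamma>s)
  then have "homotopic_paths (-P) (\<gamma> +++ joinlist \<gamma>s) (const_loop +++ const_loop)"
    by (intro homotopic_paths_join) (auto simp: is_loop_def dest: homotopic_paths_imp_pathstart)
  also have "homotopic_paths (-P) (const_loop +++ const_loop) const_loop"
    using homotopic_paths_lid[of const_loop "-P"] assms(1) by (simp add: const_loop_eq)
  finally show ?case
    by (simp add: joinlist_def)
qed

lemma is_loop_lasso:
  assumes "0 < r" "cball z r \<inter> P = {z}"
    and "path \<alpha>" "path_image \<alpha> \<subseteq> -P" "pathstart \<alpha> = basept" "pathfinish \<alpha> = z + of_real r"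
  shows "is_loop P (lasso \<alpha> z r)"
proof -
  have "sphere z r \<subseteq> -P"
  proof
    fix w assume "w \<in> sphere z r"
    then have "w \<in> cball z r" "w \<noteq> z"
      using assms(1) by auto
    then show "w \<in> -P"
      using assms(2) by blast
  qed
  then show ?thesis
    using assms by (simp add: is_loop_def path_image_lasso)
qed

lemma lasso_not_homotopic_const_loop:
  assumes "path \<alpha>" "pathfinish \<alpha> = z + of_real r"
    and p: "p \<in> P" "p \<notin> path_image (lasso \<alpha> z r)" "dist z p < r" and "basept \<notin> P"
  shows "\<not> homotopic_paths (-P) (lasso \<alpha> z r) const_loop"
proof
  assume "homotopic_paths (-P) (lasso \<alpha> z r) const_loop"
  then have "homotopic_paths (-{p}) (lasso \<alpha> z r) const_loop"
    by (rule homotopic_paths_subset) (use p in auto)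
  then have "winding_number (lasso \<alpha> z r) p = winding_number const_loop p"
    by (rule winding_number_homotopic_paths)
  moreover have "p \<noteq> basept"
    using assms by blast
  moreover have "p \<notin> path_image \<alpha>"
  proof -
    have "0 < r"
      using p(3) zero_le_dist[of z p] by linarith
    then show ?thesis
      using p(2) path_image_lasso[OF assms(2)] by blast
  qed
  ultimately show False
    using winding_number_lasso[OF assms(1,2) \<open>p \<notin> path_image \<alpha>\<close> p(3)] by (simp add: const_loop_eq)
qed

section \<open>Iterated products in augmented PMQs\<close>

lemma pmq_unit_mem: "pmq Q unit1 cj D pprod \<Longrightarrow> unit1 \<in> Q"
  unfolding pmq_def by (elim conjE)

lemma pmq_pprod_mem: "pmq Q unit1 cj D pprod \<Longrightarrow> (a, b) \<in> D \<Longrightarrow> pprod a b \<in> Q"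
  unfolding pmq_def by (elim conjE) blast

lemma pmq_unit_left:
  "pmq Q unit1 cj D pprod \<Longrightarrow> a \<in> Q \<Longrightarrow> (unit1, a) \<in> D \<and> pprod unit1 a = a"
  unfolding pmq_def by (elim conjE) blast

lemma pmq_listprod_eq_unit_imp_all_unit:
  assumes pmq: "pmq Q unit1 cj D pprod" and aug: "pmq_augmented Q unit1 D pprod"
    and "set xs \<subseteq> Q" and "pmq_listprod unit1 D pprod xs = Some unit1"
  shows "\<forall>x\<in>set xs. x = unit1"
proof -
  have "a = unit1 \<and> (\<forall>x\<in>set xs. x = unit1)"
    if "a \<in> Q" "set xs \<subseteq> Q"
      "foldl (\<lambda>acc a. Option.bind acc (\<lambda>x. pmul D pprod x a)) (Some a) xs = Some unit1" for a
    using that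
  proof (induction xs arbitrary: a)
    case (Cons x xs)
    have none: "foldl (\<lambda>acc a. Option.bind acc (\<lambda>x. pmul D pprod x a)) None ys = None" for ys
      by (induction ys) auto
    with Cons.prems have ax: "(a, x) \<in> D"
      by (cases "(a, x) \<in> D") (auto simp: pmul_def)
    have "pprod a x \<in> Q"
      using pmq ax by (rule pmq_pprod_mem)
    then have "pprod a x = unit1 \<and> (\<forall>x\<in>set xs. x = unit1)"
      using Cons ax by (auto simp: pmul_def)
    then show ?case
      using aug ax Cons.prems unfolding pmq_augmented_def by auto
  qed simp
  moreover have "unit1 \<in> Q"
    using pmq by (rule pmq_unit_mem)
  ultimately show ?thesis
    using assms(3,4) unfolding pmq_listprod_def by blast
qed

lemma ext_val_QP:
  assumes "pmq Q unit1 cj D pprod" and \<gamma>: "is_loop P \<gamma>" "lclass P \<gamma> \<in> QP Y P"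
    and "\<psi> (lclass P \<gamma>) \<in> Q"
  shows "ext_val unit1 D pprod Y P \<psi> (lclass P \<gamma>) (\<psi> (lclass P \<gamma>))"
proof -
  have "homotopic_paths (-P) \<gamma> (\<gamma> +++ const_loop)"
    using homotopic_paths_rid[of \<gamma> "-P"] \<gamma> by (simp add: is_loop_def const_loop_eq homotopic_paths_sym)
  then have "lclass P \<gamma> = lclass P (joinlist [\<gamma>])"
    unfolding joinlist_def by (simp add: lclass_eqI)
  moreover have "pmq_listprod unit1 D pprod [\<psi> (lclass P \<gamma>)] = Some (\<psi> (lclass P \<gamma>))"
    using pmq_unit_left[OF assms(1,4)] by (simp add: pmq_listprod_def pmul_def)
  ultimately show ?thesis
    unfolding ext_val_def using \<gamma> by (intro exI[of _ "[\<gamma>]"]) simp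
qed

lemma Hur_plus_ext_val_unit:
  assumes pmq: "pmq Q unit1 cj D pprod" and aug: "pmq_augmented Q unit1 D pprod"
    and bp: "basept \<notin> P" and c: "(P, \<psi>, \<phi>) \<in> Hur_plus_set X Y Q unit1 cj G e act"
    and "ext_val unit1 D pprod Y P \<psi> g unit1"
  shows "g = lclass P const_loop"
proof -
  obtain \<gamma>s where \<gamma>s: "\<forall>\<gamma>\<in>set \<gamma>s. is_loop P \<gamma> \<and> lclass P \<gamma> \<in> QP Y P"
    and g: "g = lclass P (joinlist \<gamma>s)"
    and prod: "pmq_listprod unit1 D pprod (map (\<lambda>\<gamma>. \<psi> (lclass P \<gamma>)) \<gamma>s) = Some unit1"
    using assms(5) unfolding ext_val_def by blast
  have \<psi>Q: "\<forall>x\<in>QP Y P. \<psi> x \<in> Q" and plus: "\<forall>x\<in>QP Y P. \<psi> x = unit1 \<longrightarrow> x = lclass P const_loop"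
    using c by (auto simp: Hur_plus_set_def Hur_set_def)
  have unit: "\<forall>\<gamma>\<in>set \<gamma>s. \<psi> (lclass P \<gamma>) = unit1"
    using pmq_listprod_eq_unit_imp_all_unit[OF pmq aug _ prod] \<gamma>s \<psi>Q by auto
  have "homotopic_paths (-P) \<gamma> const_loop" if "\<gamma> \<in> set \<gamma>s" for \<gamma>
    by (rule lclass_eqD) (use \<gamma>s plus unit that in \<open>auto simp: is_loop_def\<close>)
  then have "\<forall>\<gamma>\<in>set \<gamma>s. is_loop P \<gamma> \<and> homotopic_paths (-P) \<gamma> const_loop"
    using \<gamma>s by blast
  then show ?thesis
    unfolding g by (intro lclass_eqI homotopic_paths_joinlist_const bp)
qed

lemma normal_nbhd_subset_Hur_set:
  "normal_nbhd X Y Q unit1 cj D pprod G e act c U \<subseteq> Hur_set X Y Q unit1 cj G e act"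
  unfolding normal_nbhd_def by (cases c) auto

lemma mem_normal_nbhd_balls:
  assumes pmq: "pmq Q unit1 cj D pprod" and c: "(P, \<psi>, \<phi>) \<in> Hur_set X Y Q unit1 cj G e act"
    and d: "d > 0" and ad: "adapted Y P (\<lambda>z. ball z d)"
  shows "(P, \<psi>, \<phi>) \<in> normal_nbhd X Y Q unit1 cj D pprod G e act (P, \<psi>, \<phi>) (\<lambda>z. ball z d)"
proof -
  have \<psi>Q: "\<forall>x\<in>QP Y P. \<psi> x \<in> Q"
    using c by (simp add: Hur_set_def)
  have "\<exists>q. ext_val unit1 D pprod Y P \<psi> (lclass P (\<alpha> +++ \<gamma> +++ reversepath \<alpha>)) q"
    if z: "z \<in> P" "closure (ball z d) \<inter> Y = {}"
      and \<gamma>: "cw_scc \<gamma>" "path_image \<gamma> \<subseteq> ball z d - P"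
      and \<alpha>: "path \<alpha>" "path_image \<alpha> \<subseteq> - P" "pathstart \<alpha> = basept" "pathfinish \<alpha> = pathstart \<gamma>"
    for z \<alpha> \<gamma>
  proof -
    have "z \<in> closure (ball z d)"
      using d by simp
    then have "z \<notin> Y"
      using z(2) by blast
    moreover have "ball z d \<inter> P = {z}"
      using ad z unfolding adapted_def by blast
    ultimately have "lclass P (\<alpha> +++ \<gamma> +++ reversepath \<alpha>) \<in> QP Y P"
      using cw_scc_conjugate_in_QP d \<gamma> \<alpha> z by blast
    moreover have "is_loop P (\<alpha> +++ \<gamma> +++ reversepath \<alpha>)"
      using \<alpha> \<gamma> by (auto simp: is_loop_def cw_scc_def simple_path_imp_path path_image_join)
    ultimately show ?thesis
      using ext_val_QP[OF pmq] \<psi>Q by blast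
  qed
  then show ?thesis
    unfolding normal_nbhd_def using c d ext_val_QP[OF pmq] \<psi>Q by auto
qed

lemma normal_nbhd_disjoint_Hur_plus:
  assumes nc: "nice_couple X Y" and pmq: "pmq Q unit1 cj D pprod"
    and aug: "pmq_augmented Q unit1 D pprod"
    and z: "z \<in> P" and \<alpha>: "path \<alpha>" "pathfinish \<alpha> = z + of_real r"
    and loop: "is_loop P (lasso \<alpha> z r)" "lclass P (lasso \<alpha> z r) \<in> QP Y P"
    and unit: "\<psi> (lclass P (lasso \<alpha> z r)) = unit1"
    and d: "d \<le> r" "\<forall>w\<in>P. ball w d \<inter> path_image (lasso \<alpha> z r) = {}"
  shows "normal_nbhd X Y Q unit1 cj D pprod G e act (P, \<psi>, \<phi>) (\<lambda>z. ball z d)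
           \<inter> Hur_plus_set X Y Q unit1 cj G e act = {}"
proof (intro equals0I)
  fix c' assume c': "c' \<in> normal_nbhd X Y Q unit1 cj D pprod G e act (P, \<psi>, \<phi>) (\<lambda>z. ball z d)
                        \<inter> Hur_plus_set X Y Q unit1 cj G e act"
  obtain P' \<psi>' \<phi>' where c'_eq: "c' = (P', \<psi>', \<phi>')"
    by (cases c')
  have P'U: "P' \<subseteq> (\<Union>w\<in>P. ball w d)" and "P' \<inter> ball z d \<noteq> {}" and P'X: "P' \<subseteq> X"
    and ext: "\<forall>\<gamma>. is_loop P \<gamma> \<and> path_image \<gamma> \<inter> (\<Union>w\<in>P. ball w d) = {} \<and> lclass P \<gamma> \<in> QP Y P \<longrightarrow>
        ext_val unit1 D pprod Y P' \<psi>' (lclass P' \<gamma>) (\<psi> (lclass P \<gamma>))"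
    using c' z unfolding c'_eq normal_nbhd_def by (auto simp: Hur_set_def)
  have bp: "basept \<notin> P'"
    using nc P'X by (rule nice_couple_basept_notin)
  have far: "path_image (lasso \<alpha> z r) \<inter> (\<Union>w\<in>P. ball w d) = {}"
    using d(2) by blast
  then have "ext_val unit1 D pprod Y P' \<psi>' (lclass P' (lasso \<alpha> z r)) unit1"
    using ext loop unit by metis
  moreover have "(P', \<psi>', \<phi>') \<in> Hur_plus_set X Y Q unit1 cj G e act"
    using c' unfolding c'_eq by blast
  ultimately have "lclass P' (lasso \<alpha> z r) = lclass P' const_loop"
    using Hur_plus_ext_val_unit[OF pmq aug bp] by blast
  moreover have "path_image (lasso \<alpha> z r) \<subseteq> -P'"
    using P'U far by blast
  ultimately have null: "homotopic_paths (-P') (lasso \<alpha> z r) const_loop"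
    using loop by (intro lclass_eqD) (auto simp: is_loop_def)
  obtain p where p: "p \<in> P'" "dist z p < d"
    using \<open>P' \<inter> ball z d \<noteq> {}\<close> by auto
  have "ball z d \<inter> path_image (lasso \<alpha> z r) = {}"
    using d(2) z by blast
  then have "p \<notin> path_image (lasso \<alpha> z r)"
    using p(2) by auto
  moreover have "dist z p < r"
    using p(2) d(1) by linarith
  ultimately show False
    using lasso_not_homotopic_const_loop[OF \<alpha> p(1) _ _ bp] null by blast
qed

lemma eventually_normal_nbhd_disjoint_Hur_plus:
  assumes nc: "nice_couple X Y" and pmq: "pmq Q unit1 cj D pprod"
    and aug: "pmq_augmented Q unit1 D pprod"
    and c: "(P, \<psi>, \<phi>) \<in> Hur_set X Y Q unit1 cj G e act - Hur_plus_set X Y Q unit1 cj G e act"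
  shows "\<forall>\<^sub>F d in at_right 0. normal_nbhd X Y Q unit1 cj D pprod G e act (P, \<psi>, \<phi>) (\<lambda>z. ball z d)
           \<inter> Hur_plus_set X Y Q unit1 cj G e act = {}"
proof -
  obtain x where x: "x \<in> QP Y P" "\<psi> x = unit1" "x \<noteq> lclass P const_loop"
    using c unfolding Hur_plus_set_def by auto
  then obtain \<alpha> z r where z: "z \<in> P" and r: "r > 0" and cb: "cball z r \<inter> P = {z}"
    and \<alpha>: "path \<alpha>" "path_image \<alpha> \<subseteq> -P" "pathstart \<alpha> = basept" "pathfinish \<alpha> = z + of_real r"
    and x_eq: "x = lclass P (lasso \<alpha> z r)"
    unfolding QP_def by blast
  have loop: "is_loop P (lasso \<alpha> z r)"
    using r cb \<alpha> by (rule is_loop_lasso)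
  define K where "K = path_image (lasso \<alpha> z r)"
  have "infdist w K > 0" if "w \<in> P" for w
    using that loop unfolding K_def
    by (intro infdist_pos_not_in_closed) (auto simp: is_loop_def closed_path_image path_image_nonempty)
  then have "\<forall>\<^sub>F d in at_right 0. \<forall>w\<in>P. d < infdist w K"
    using c by (intro eventually_ball_finite ballI order_tendstoD(2)[OF tendsto_ident_at])
      (auto simp: Hur_set_def)
  moreover have "\<forall>\<^sub>F d in at_right 0. d < r"
    using r by (intro order_tendstoD(2)[OF tendsto_ident_at])
  ultimately show ?thesis
  proof eventually_elim
    case (elim d)
    then have "ball w d \<inter> K = {}" if "w \<in> P" for w
      using that infdist_le[of _ K w] by (fastforce simp: dist_commute)
    then show ?case
      using elim x x_eq unfolding K_def
      by (intro normal_nbhd_disjoint_Hur_plus[OF nc pmq aug z \<alpha>(1,4) loop]) auto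
  qed
qed

lemma openin_Hur_top_normal_nbhd:
  "c \<in> Hur_set X Y Q unit1 cj G e act \<Longrightarrow> adapted Y (fst c) U \<Longrightarrow>
    openin (Hur_top X Y Q unit1 cj D pprod G e act) (normal_nbhd X Y Q unit1 cj D pprod G e act c U)"
  unfolding Hur_top_def by (rule topology_generated_by_Basis) blast

lemma Hur_set_eventually_adapted_balls:
  assumes "nice_couple X Y" and "(P, \<psi>, \<phi>) \<in> Hur_set X Y Q unit1 cj G e act"
  shows "\<forall>\<^sub>F d in at_right 0. 0 < d \<and> adapted Y P (\<lambda>z. ball z d)"
  using assms nice_couple_basept_notin[OF assms(1)]
  by (intro eventually_conj eventually_at_right_less eventually_adapted_balls)
    (auto simp: nice_couple_def Hur_set_def)

lemma topspace_Hur_top: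
  assumes "nice_couple X Y" and "pmq Q unit1 cj D pprod"
  shows "topspace (Hur_top X Y Q unit1 cj D pprod G e act) = Hur_set X Y Q unit1 cj G e act"
proof
  show "topspace (Hur_top X Y Q unit1 cj D pprod G e act) \<subseteq> Hur_set X Y Q unit1 cj G e act"
    unfolding Hur_top_def using normal_nbhd_subset_Hur_set by fastforce
next
  show "Hur_set X Y Q unit1 cj G e act \<subseteq> topspace (Hur_top X Y Q unit1 cj D pprod G e act)"
  proof
    fix c assume c: "c \<in> Hur_set X Y Q unit1 cj G e act"
    obtain P \<psi> \<phi> where c_eq: "c = (P, \<psi>, \<phi>)"
      by (cases c)
    obtain d where d: "0 < d" "adapted Y P (\<lambda>z. ball z d)"
      using eventually_happens[OF Hur_set_eventually_adapted_balls[OF assms(1) c[unfolded c_eq]]] by auto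
    let ?N = "normal_nbhd X Y Q unit1 cj D pprod G e act c (\<lambda>z. ball z d)"
    have "openin (Hur_top X Y Q unit1 cj D pprod G e act) ?N"
      using c c_eq d by (intro openin_Hur_top_normal_nbhd) auto
    moreover have "c \<in> ?N"
      using mem_normal_nbhd_balls[OF assms(2)] c c_eq d by simp
    ultimately show "c \<in> topspace (Hur_top X Y Q unit1 cj D pprod G e act)"
      using openin_subset by blast
  qed
qed

lemma open_nbhd_disjoint_Hur_plus:
  assumes nc: "nice_couple X Y" and pmq: "pmq Q unit1 cj D pprod"
    and aug: "pmq_augmented Q unit1 D pprod"
    and c: "c \<in> Hur_set X Y Q unit1 cj G e act - Hur_plus_set X Y Q unit1 cj G e act"
  shows "\<exists>N. openin (Hur_top X Y Q unit1 cj D pprod G e act) N \<and> c \<in> N \<and>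
           N \<inter> Hur_plus_set X Y Q unit1 cj G e act = {}"
proof -
  obtain P \<psi> \<phi> where c_eq: "c = (P, \<psi>, \<phi>)"
    by (cases c)
  let ?N = "\<lambda>d. normal_nbhd X Y Q unit1 cj D pprod G e act c (\<lambda>z. ball z d)"
  have "\<forall>\<^sub>F d in at_right 0. (0 < d \<and> adapted Y P (\<lambda>z. ball z d)) \<and>
          ?N d \<inter> Hur_plus_set X Y Q unit1 cj G e act = {}"
    using c unfolding c_eq
    by (intro eventually_conj[OF Hur_set_eventually_adapted_balls[OF nc]
        eventually_normal_nbhd_disjoint_Hur_plus[OF nc pmq aug]]) auto
  then obtain d where d: "0 < d" "adapted Y P (\<lambda>z. ball z d)"
    and disj: "?N d \<inter> Hur_plus_set X Y Q unit1 cj G e act = {}"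
    by (blast dest: eventually_happens'[OF trivial_limit_at_right_real])
  have "openin (Hur_top X Y Q unit1 cj D pprod G e act) (?N d)"
    using c c_eq d by (intro openin_Hur_top_normal_nbhd) auto
  moreover have "c \<in> ?N d"
    unfolding c_eq using c c_eq by (intro mem_normal_nbhd_balls[OF pmq _ d]) auto
  ultimately show ?thesis
    using disj by blast
qed

theorem lemma7p2:
  fixes X Y :: "complex set"
    and Q :: "'q set" and unit1 :: 'q and cj :: "'q \<Rightarrow> 'q \<Rightarrow> 'q"
    and D :: "('q \<times> 'q) set" and pprod :: "'q \<Rightarrow> 'q \<Rightarrow> 'q"
    and G :: "('g, 'm) monoid_scheme" and e :: "'q \<Rightarrow> 'g" and act :: "'q \<Rightarrow> 'g \<Rightarrow> 'q"
  assumes "nice_couple X Y"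
    and "pmq_group_pair Q unit1 cj D pprod G e act"
    and "pmq_augmented Q unit1 D pprod"
  shows "closedin (Hur_top X Y Q unit1 cj D pprod G e act) (Hur_plus_set X Y Q unit1 cj G e act)"
proof -
  have pmq: "pmq Q unit1 cj D pprod"
    using assms(2) by (simp add: pmq_group_pair_def)
  let ?T = "Hur_top X Y Q unit1 cj D pprod G e act"
  let ?H = "Hur_set X Y Q unit1 cj G e act" and ?Hplus = "Hur_plus_set X Y Q unit1 cj G e act"
  have topspace: "topspace ?T = ?H"
    using assms(1) pmq by (rule topspace_Hur_top)
  have "openin ?T (?H - ?Hplus)"
  proof (rule openin_subopen[THEN iffD2], intro ballI)
    fix c assume "c \<in> ?H - ?Hplus"
    then obtain N where N: "openin ?T N" "c \<in> N" "N \<inter> ?Hplus = {}"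
      by (metis open_nbhd_disjoint_Hur_plus[OF assms(1) pmq assms(3)])
    moreover have "N \<subseteq> ?H"
      using openin_subset[OF N(1)] by (simp only: topspace)
    ultimately show "\<exists>N. openin ?T N \<and> c \<in> N \<and> N \<subseteq> ?H - ?Hplus"
      by blast
  qed
  moreover have "?Hplus \<subseteq> ?H"
    by (auto simp: Hur_plus_set_def)
  ultimately show ?thesis
    unfolding closedin_def topspace by blast
qed

end
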